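(* In the model and protocol $\mathrm{OciorABA}$ described in the context, with $n\ge 3t+1$, if every honest node receives an input message, then every honest node eventually outputs a value and terminates.
   Context: Model: there are $n$ nodes $\mathrm{Node}_1,\dots,\mathrm{Node}_n$ in an asynchronous network (every message sent between honest nodes is eventually delivered, with arbitrary adversarial delay). An adaptive adversary may corrupt at most $t$ nodes in total; $\mathcal F\subseteq[1:n]$ denotes the set of dishonest nodes; $n\ge 3t+1$. The symbol $\bot$ denotes "missing"; for a vector $v\in\{0,1,\bot\}^n$ let $\mathcal M(v)=\{j\in[1:n]: v[j]\neq\bot\}$. Primitives used as black boxes: (RBC) For each $j\in[1:n]$ a reliable broadcast instance $\mathrm{RBC}_j$ with leader $\mathrm{Node}_j$, satisfying Consistency (two honest outputs are equal), Validity (if the leader is honest and inputs $w$, every honest node eventually outputs $w$), and Totality (if one honest node outputs a value, every honest node eventually outputs a value). (APVA) An asynchronous partial vector agreement instance: each honest $\mathrm{Node}_i$ holds an input vector $a_i\in\{0,1,\bot\}^n$, initially all $\bot$, whose entries may over time change from $\bot$ to a value in $\{0,1\}$ (and are then fixed); each node outputs at most one vector in $\{0,1,\bot\}^n$. It satisfies: Consistency (if an honest node outputs $v$, every honest node eventually outputs $v$); Validity (if an honest node outputs $v$, then for every $j$ with $v[j]\neq\bot$ some honest $\mathrm{Node}_i$ has input $a_i[j]=v[j]$, and $|\mathcal M(v)|\ge n-t$); Termination (if there is a set of at least $n-t$ positions at which all honest nodes have non-missing input entries, then every honest node eventually outputs a vector and terminates). (Erasure code) An $(n,t+1)$ erasure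 code: $\mathrm{Enc}(w)=(\mathrm{Enc}_1(w),\dots,\mathrm{Enc}_n(w))$ and $\mathrm{Dec}$ with $\mathrm{Dec}(\{\mathrm{Enc}_j(w)\}_{j\in K})=w$ for every $K\subseteq[1:n]$, $|K|=t+1$. Protocol $\mathrm{OciorABA}$, code for an honest $\mathrm{Node}_i$ with input message $w_i$: (1) Compute $(y^{(i)}_1,\dots,y^{(i)}_n)=\mathrm{Enc}(w_i)$ and input $y^{(i)}_i$ into $\mathrm{RBC}_i$ (as leader). (2) Upon delivery of $y^{(j)}_j$ from $\mathrm{RBC}_j$ (after step (1)), set $a_i[j]=1$ if $y^{(j)}_j=y^{(i)}_j$ and $a_i[j]=0$ otherwise, and pass $a_i[j]$ into APVA as the $j$-th entry of its input vector. (3) Upon APVA outputting $v$: let $S=\{j: v[j]=1\}$. If $|S|<t+1$, output a default value $\bot$ and terminate. Otherwise let $K$ be the $t+1$ smallest elements of $S$, wait for delivery of $y^{(j)}_j$ from $\mathrm{RBC}_j$ for all $j\in K$, output $\mathrm{Dec}(\{y^{(j)}_j\}_{j\in K})$ and terminate. *)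

theory Defs
  imports Main
begin

text \<open>
Time is discrete (nat) and only used to express
"eventually". Nodes are indexed by {1..n}; F is the set of nodes that are
(ever) corrupted by the adaptive adversary, so honest nodes are {1..n} - F.

  rbc tau i j = Some y : by time tau, Node_i has delivered y from RBC_j.
  apva tau i = Some v  : by time tau, Node_i has output vector v from APVA.
  Vectors in {0,1,bot}^n are functions nat => bool option
  (None = bot, Some True = 1, Some False = 0).
\<close>

definition honest :: "nat \<Rightarrow> nat set \<Rightarrow> nat set" where
  "honest n F = {1..n} - F"

definition nonmissing :: "nat \<Rightarrow> (nat \<Rightarrow> bool option) \<Rightarrow> nat set" where
  "nonmissing n v = {j \<in> {1..n}. v j \<noteq> None}"

definition erasure_code ::
  "nat \<Rightarrow> nat \<Rightarrow> ('w \<Rightarrow> nat \<Rightarrow> 's) \<Rightarrow> ((nat \<Rightarrow> 's option) \<Rightarrow> 'w) \<Rightarrow> bool" where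
  "erasure_code n t Enc Dec \<longleftrightarrow>
     (\<forall>w K. K \<subseteq> {1..n} \<and> card K = t + 1 \<longrightarrow>
        Dec (\<lambda>j. if j \<in> K then Some (Enc w j) else None) = w)"

text \<open>RBC properties; the honest leader j inputs ldr_in j (here Enc_j(w_j)).
Outputs are single-shot: once delivered, fixed.\<close>
definition rbc_props ::
  "nat \<Rightarrow> nat set \<Rightarrow> (nat \<Rightarrow> 's) \<Rightarrow> (nat \<Rightarrow> nat \<Rightarrow> nat \<Rightarrow> 's option) \<Rightarrow> bool" where
  "rbc_props n F ldr_in rbc \<longleftrightarrow>
     (\<forall>i\<in>honest n F. \<forall>j\<in>{1..n}. \<forall>\<tau> \<tau>' y. rbc \<tau> i j = Some y \<and> \<tau> \<le> \<tau>' \<longrightarrow> rbc \<tau>' i j = Some y) \<and>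
     (\<forall>j\<in>{1..n}. \<forall>i\<in>honest n F. \<forall>i'\<in>honest n F. \<forall>\<tau> \<tau>' y y'.
        rbc \<tau> i j = Some y \<and> rbc \<tau>' i' j = Some y' \<longrightarrow> y = y') \<and>
     (\<forall>j\<in>honest n F. \<forall>i\<in>honest n F. \<exists>\<tau>. rbc \<tau> i j = Some (ldr_in j)) \<and>
     (\<forall>j\<in>{1..n}. (\<exists>i\<in>honest n F. \<exists>\<tau>. rbc \<tau> i j \<noteq> None) \<longrightarrow>
        (\<forall>i\<in>honest n F. \<exists>\<tau>. rbc \<tau> i j \<noteq> None))"

text \<open>APVA properties with respect to the (time-varying) honest inputs
a tau i j (entries only change from None to a fixed value).\<close>
definition apva_props ::
  "nat \<Rightarrow> nat \<Rightarrow> nat set \<Rightarrow> (nat \<Rightarrow> nat \<Rightarrow> nat \<Rightarrow> bool option)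
     \<Rightarrow> (nat \<Rightarrow> nat \<Rightarrow> (nat \<Rightarrow> bool option) option) \<Rightarrow> bool" where
  "apva_props n t F a apva \<longleftrightarrow>
     (\<forall>i\<in>honest n F. \<forall>\<tau> \<tau>' v. apva \<tau> i = Some v \<and> \<tau> \<le> \<tau>' \<longrightarrow> apva \<tau>' i = Some v) \<and>
     (\<forall>i\<in>honest n F. \<forall>\<tau> v. apva \<tau> i = Some v \<longrightarrow>
        (\<forall>i'\<in>honest n F. \<exists>\<tau>'. apva \<tau>' i' = Some v)) \<and>
     (\<forall>i\<in>honest n F. \<forall>\<tau> v. apva \<tau> i = Some v \<longrightarrow>
        (\<forall>j. j \<notin> {1..n} \<longrightarrow> v j = None) \<and>
        (\<forall>j\<in>{1..n}. v j \<noteq> None \<longrightarrow> (\<exists>i'\<in>honest n F. \<exists>\<tau>'. a \<tau>' i' j = v j)) \<and>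
        card (nonmissing n v) \<ge> n - t) \<and>
     ((\<exists>P \<subseteq> {1..n}. card P \<ge> n - t \<and>
         (\<forall>i\<in>honest n F. \<forall>j\<in>P. \<exists>\<tau>. a \<tau> i j \<noteq> None)) \<longrightarrow>
        (\<forall>i\<in>honest n F. \<exists>\<tau>. apva \<tau> i \<noteq> None))"

definition ocior_input ::
  "nat \<Rightarrow> ('w \<Rightarrow> nat \<Rightarrow> 's) \<Rightarrow> (nat \<Rightarrow> 'w) \<Rightarrow> (nat \<Rightarrow> nat \<Rightarrow> nat \<Rightarrow> 's option)
     \<Rightarrow> nat \<Rightarrow> nat \<Rightarrow> nat \<Rightarrow> bool option" where
  "ocior_input n Enc w rbc \<tau> i j =
     (if j \<in> {1..n} then map_option (\<lambda>y. y = Enc (w i) j) (rbc \<tau> i j) else None)"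

definition smallest :: "nat \<Rightarrow> nat set \<Rightarrow> nat set" where
  "smallest k S = {j \<in> S. card {l \<in> S. l < j} < k}"

text \<open>Step (3): output of honest Node_i by time tau.
None = no output yet; Some None = default output bot; Some (Some m) = decoded m.\<close>
definition ocior_output ::
  "nat \<Rightarrow> nat \<Rightarrow> ((nat \<Rightarrow> 's option) \<Rightarrow> 'w) \<Rightarrow> (nat \<Rightarrow> nat \<Rightarrow> nat \<Rightarrow> 's option)
     \<Rightarrow> (nat \<Rightarrow> nat \<Rightarrow> (nat \<Rightarrow> bool option) option) \<Rightarrow> nat \<Rightarrow> nat \<Rightarrow> 'w option option" where
  "ocior_output n t Dec rbc apva \<tau> i =
     (case apva \<tau> i of
        None \<Rightarrow> None
      | Some v \<Rightarrow>
          (let S = {j \<in> {1..n}. v j = Some True} in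
           if card S < t + 1 then Some None
           else (let K = smallest (t + 1) S in
                 if (\<forall>j\<in>K. rbc \<tau> i j \<noteq> None)
                 then Some (Some (Dec (\<lambda>j. if j \<in> K then rbc \<tau> i j else None)))
                 else None)))"

end

theory Submission
  imports Defs
begin

text \<open>
Honest leaders' broadcasts reach every honest node (RBC validity), so all honest
nodes eventually have non-missing APVA inputs at the at least n - t honest
positions, and APVA terminates with some vector v. If v has fewer than t + 1 ones
the node outputs the default at once. Otherwise every position j with v j = 1 is
backed by an honest input, i.e. by an RBC_j delivery at some honest node, so by
RBC totality RBC_j also delivers at the node itself; these finitely many
deliveries happen by a common time, at which the node decodes. The resilience
n \<ge> 3t + 1 and the erasure code are needed for the correctness of the output,
not for termination.
\<close>

lemma ex_common_time_finite:
  fixes P :: "nat \<Rightarrow> 'a \<Rightarrow> bool"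
  assumes "finite K" and "\<forall>j\<in>K. \<exists>\<tau>. P \<tau> j"
    and mono: "\<And>j \<tau> \<tau>'. j \<in> K \<Longrightarrow> P \<tau> j \<Longrightarrow> \<tau> \<le> \<tau>' \<Longrightarrow> P \<tau>' j"
  shows "\<exists>\<tau>\<ge>\<tau>\<^sub>0. \<forall>j\<in>K. P \<tau> j"
proof -
  obtain f where f: "\<forall>j\<in>K. P (f j) j" using assms(2) by metis
  define T where "T = max \<tau>\<^sub>0 (Max (insert 0 (f ` K)))"
  have "\<forall>j\<in>K. f j \<le> T" unfolding T_def using assms(1) by (simp add: le_max_iff_disj)
  then have "\<forall>j\<in>K. P T j" using f mono by blast
  moreover have "T \<ge> \<tau>\<^sub>0" unfolding T_def by simp
  ultimately show ?thesis by blast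
qed

lemma honest_subset: "honest n F \<subseteq> {1..n}"
  by (auto simp: honest_def)

lemma card_honest_ge:
  assumes "F \<subseteq> {1..n}" and "card F \<le> t"
  shows "n - t \<le> card (honest n F)"
  using assms by (simp add: honest_def card_Diff_subset finite_subset)

lemma rbc_stable:
  assumes "rbc_props n F ldr rbc" and "i \<in> honest n F" and "j \<in> {1..n}"
    and "rbc \<tau> i j \<noteq> None" and "\<tau> \<le> \<tau>'"
  shows "rbc \<tau>' i j \<noteq> None"
  using assms(1)[unfolded rbc_props_def, THEN conjunct1] assms(2-) by blast

lemma rbc_validity:
  assumes "rbc_props n F ldr rbc" and "i \<in> honest n F" and "j \<in> honest n F"
  shows "\<exists>\<tau>. rbc \<tau> i j = Some (ldr j)"
  using assms(1)[unfolded rbc_props_def, THEN conjunct2, THEN conjunct2, THEN conjunct1] assms(2,3)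
  by blast

lemma rbc_totality:
  assumes "rbc_props n F ldr rbc" and "j \<in> {1..n}"
    and "i' \<in> honest n F" and "rbc \<tau>' i' j \<noteq> None" and "i \<in> honest n F"
  shows "\<exists>\<tau>. rbc \<tau> i j \<noteq> None"
  using assms(1)[unfolded rbc_props_def, THEN conjunct2, THEN conjunct2, THEN conjunct2] assms(2-)
  by blast

lemma apva_stable:
  assumes "apva_props n t F a apva" and "i \<in> honest n F"
    and "apva \<tau> i = Some v" and "\<tau> \<le> \<tau>'"
  shows "apva \<tau>' i = Some v"
  using assms(1)[unfolded apva_props_def, THEN conjunct1] assms(2-) by blast

lemma apva_validity:
  assumes "apva_props n t F a apva" and "i \<in> honest n F" and "apva \<tau> i = Some v"
    and "j \<in> {1..n}" and "v j \<noteq> None"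
  shows "\<exists>i'\<in>honest n F. \<exists>\<tau>'. a \<tau>' i' j = v j"
  using assms(1)[unfolded apva_props_def, THEN conjunct2, THEN conjunct2, THEN conjunct1] assms(2-)
  by blast

lemma apva_termination:
  assumes "apva_props n t F a apva" and "P \<subseteq> {1..n}" and "n - t \<le> card P"
    and "\<forall>i\<in>honest n F. \<forall>j\<in>P. \<exists>\<tau>. a \<tau> i j \<noteq> None" and "i \<in> honest n F"
  shows "\<exists>\<tau>. apva \<tau> i \<noteq> None"
  using assms(1)[unfolded apva_props_def, THEN conjunct2, THEN conjunct2, THEN conjunct2] assms(2-)
  by blast

lemma ocior_input_from_honest_leader:
  assumes "rbc_props n F ldr rbc" and "i \<in> honest n F" and "j \<in> honest n F"
  shows "\<exists>\<tau>. ocior_input n Enc w rbc \<tau> i j \<noteq> None"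
proof -
  obtain \<tau> where "rbc \<tau> i j = Some (ldr j)" using rbc_validity[OF assms] by blast
  moreover have "j \<in> {1..n}" using assms(3) honest_subset by blast
  ultimately show ?thesis by (auto simp: ocior_input_def)
qed

lemma ocior_apva_terminates:
  assumes "F \<subseteq> {1..n}" and "card F \<le> t"
    and "rbc_props n F ldr rbc"
    and "apva_props n t F (ocior_input n Enc w rbc) apva"
    and "i \<in> honest n F"
  shows "\<exists>\<tau> v. apva \<tau> i = Some v"
proof -
  have "\<forall>i\<in>honest n F. \<forall>j\<in>honest n F. \<exists>\<tau>. ocior_input n Enc w rbc \<tau> i j \<noteq> None"
    using ocior_input_from_honest_leader[OF assms(3)] by blast
  then have "\<exists>\<tau>. apva \<tau> i \<noteq> None"
    by (rule apva_termination[OF assms(4) honest_subset card_honest_ge[OF assms(1,2)] _ assms(5)])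
  then show ?thesis by blast
qed

lemma ocior_rbc_delivers_apva_entries:
  assumes "rbc_props n F ldr rbc"
    and "apva_props n t F (ocior_input n Enc w rbc) apva"
    and "i \<in> honest n F" and "apva \<tau> i = Some v"
    and "j \<in> {1..n}" and "v j \<noteq> None"
  shows "\<exists>\<tau>'. rbc \<tau>' i j \<noteq> None"
proof -
  obtain i' \<tau>' where i': "i' \<in> honest n F" and "ocior_input n Enc w rbc \<tau>' i' j = v j"
    using apva_validity[OF assms(2-6)] by blast
  then have "rbc \<tau>' i' j \<noteq> None"
    using assms(6) by (auto simp: ocior_input_def split: if_splits)
  then show ?thesis using rbc_totality[OF assms(1,5) i' _ assms(3)] by blast
qed

lemma ocior_output_defined:
  assumes "apva \<tau> i = Some v"
    and "\<forall>j\<in>smallest (t + 1) {j \<in> {1..n}. v j = Some True}. rbc \<tau> i j \<noteq> None"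
  shows "\<exists>out. ocior_output n t Dec rbc apva \<tau> i = Some out"
  using assms by (simp add: ocior_output_def Let_def)

theorem theorem4:
  fixes n t :: nat and F :: "nat set"
    and w :: "nat \<Rightarrow> 'w"
    and Enc :: "'w \<Rightarrow> nat \<Rightarrow> 's" and Dec :: "(nat \<Rightarrow> 's option) \<Rightarrow> 'w"
    and rbc :: "nat \<Rightarrow> nat \<Rightarrow> nat \<Rightarrow> 's option"
    and apva :: "nat \<Rightarrow> nat \<Rightarrow> (nat \<Rightarrow> bool option) option"
  assumes "n \<ge> 3 * t + 1"
    and "F \<subseteq> {1..n}" and "card F \<le> t"
    and "erasure_code n t Enc Dec"
    and "rbc_props n F (\<lambda>j. Enc (w j) j) rbc"
    and "apva_props n t F (ocior_input n Enc w rbc) apva"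
  shows "\<forall>i\<in>honest n F. \<exists>\<tau> out. ocior_output n t Dec rbc apva \<tau> i = Some out"
proof
  fix i assume i: "i \<in> honest n F"
  obtain \<tau>\<^sub>0 v where v: "apva \<tau>\<^sub>0 i = Some v"
    using ocior_apva_terminates[OF assms(2,3,5,6) i] by blast
  define K where "K = smallest (t + 1) {j \<in> {1..n}. v j = Some True}"
  have K: "K \<subseteq> {1..n}" "\<forall>j\<in>K. v j = Some True" by (auto simp: K_def smallest_def)
  have "finite K" using K(1) finite_subset by blast
  moreover have "\<forall>j\<in>K. \<exists>\<tau>. rbc \<tau> i j \<noteq> None"
  proof
    fix j assume "j \<in> K"
    with K show "\<exists>\<tau>. rbc \<tau> i j \<noteq> None"
      by (intro ocior_rbc_delivers_apva_entries[OF assms(5,6) i v]) auto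
  qed
  moreover have "rbc \<tau>' i j \<noteq> None"
    if "j \<in> K" and "rbc \<tau> i j \<noteq> None" and "\<tau> \<le> \<tau>'" for j \<tau> \<tau>'
    using rbc_stable[OF assms(5) i] K(1) that by blast
  ultimately have "\<exists>\<tau>\<ge>\<tau>\<^sub>0. \<forall>j\<in>K. rbc \<tau> i j \<noteq> None"
    by (rule ex_common_time_finite)
  then obtain \<tau> where "\<tau> \<ge> \<tau>\<^sub>0" and delivered: "\<forall>j\<in>K. rbc \<tau> i j \<noteq> None"
    by blast
  then have "apva \<tau> i = Some v" using apva_stable[OF assms(6) i v] by blast
  from ocior_output_defined[where apva = apva and rbc = rbc and Dec = Dec,
      OF this delivered[unfolded K_def]]
  show "\<exists>\<tau> out. ocior_output n t Dec rbc apva \<tau> i = Some out" by blast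
qed

end
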